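(* Let $(\Omega,\mathcal{A},\mathbb{P})$ be a probability space and $k\colon\Omega\times\mathbb{R}\times\mathbb{R}\to\mathbb{R}$ jointly measurable, with mean kernel $K(s,t)=\mathbb{E}_\omega[k(\omega,s,t)]$ continuous and positive definite. Let $X\subset\mathbb{R}^d$ be compact. Assume: (i) almost surely, $k(\omega,s,t)$ is $L_k$-Lipschitz in $s$, uniformly in $t$; (ii) $\rho$ is a Borel probability measure on $Z=\mathbb{R}^d\times\mathbb{R}\times\mathbb{R}$ supported on $S=\{(a,b,t)\in Z:\|a\|_2\le1,\ |b|\le1,\ |t|\le1\}$; (iii) $|k(\omega,s,t)|\le1$ almost surely. Let $c\in C(S)$, $f(x)=\int_S c(a,b,t)K(\langle a,x\rangle+b,t)\,d\rho(a,b,t)$, and $C=\|c\|_{L^\infty(S)}$. Draw $z_i=(a_i,b_i,t_i)$ i.i.d. with law $\rho$ and $\omega_i$ i.i.d. with law $\mathbb{P}$, independently, $i=1,\dots,N$, and set $$F_N(x)=\frac1N\sum_{i=1}^N c(z_i)\,k(\omega_i,\langle a_i,x\rangle+b_i,t_i).$$ Then for any $\delta\in(0,1)$ and $\epsilon>0$, with probability at least $1-\delta$ over the joint draw of $\{z_i,\omega_i\}_{i=1}^N$, $$\sup_{x\in X}|F_N(x)-f(x)|\le C\sqrt{\frac{2\log(2\mathcal{N}(\epsilon,X))+2\log(1/\delta)}{N}}+2CL_k\epsilon,$$ where $\mathcal{N}(\epsilon,X)$ is the $\epsilon$-covering number of $X$ in the Euclidean metric. *)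

theory Defs
  imports "HOL-Probability.Probability"
begin

definition mean_kernel :: "'w measure \<Rightarrow> ('w \<Rightarrow> real \<Rightarrow> real \<Rightarrow> real) \<Rightarrow> real \<Rightarrow> real \<Rightarrow> real" where
  "mean_kernel M k s t = (\<integral>\<omega>. k \<omega> s t \<partial>M)"

definition pd_kernel :: "(real \<Rightarrow> real \<Rightarrow> real) \<Rightarrow> bool" where
  "pd_kernel K \<longleftrightarrow> (\<forall>s t. K s t = K t s) \<and>
     (\<forall>(n::nat) (x::nat \<Rightarrow> real) (a::nat \<Rightarrow> real).
        0 \<le> (\<Sum>i<n. \<Sum>j<n. a i * a j * K (x i) (x j)))"

definition covering_number :: "real \<Rightarrow> 'a::metric_space set \<Rightarrow> nat" where
  "covering_number \<epsilon> X = Inf {card D | D. finite D \<and> X \<subseteq> (\<Union>y\<in>D. cball y \<epsilon>)}"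

end

(*
  For fixed x the summands c(z_i) k(omega_i, <a_i, x> + b_i, t_i) are i.i.d., bounded by C, and
  by Fubini their mean is f(x); so Hoeffding's inequality controls |F_N(x) - f(x)|.  A union bound
  over a minimal epsilon-net of X, with confidence delta / N(epsilon, X) at each net point, makes
  this hold at all net points simultaneously with probability at least 1 - delta.  Since |a| <= 1,
  both F_N and f are C L_k-Lipschitz in x, so passing from the nearest net point to an arbitrary
  x in X costs at most 2 C L_k epsilon.
*)

theory Submission
  imports Defs
begin

lemma indep_vars_PiM_components:
  assumes M: "\<And>i. i \<in> I \<Longrightarrow> prob_space (M i)"
  shows "prob_space.indep_vars (PiM I M) M (\<lambda>i \<xi>. \<xi> i) I"
proof -
  interpret P: prob_space "PiM I M" using M by (rule prob_space_PiM)
  show ?thesis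
  proof (cases "I = {}")
    case True
    show ?thesis unfolding P.indep_vars_def P.indep_sets_def using True by auto
  next
    case False
    have "distr (PiM I M) (PiM I M) (\<lambda>\<xi>. \<lambda>i\<in>I. \<xi> i) = distr (PiM I M) (PiM I M) (\<lambda>\<xi>. \<xi>)"
      by (intro distr_cong) (auto simp: space_PiM PiE_def extensional_def)
    then show ?thesis
      using M by (subst P.indep_vars_iff_distr_eq_PiM'[OF False])
        (auto intro!: PiM_cong distr_PiM_component[symmetric])
  qed
qed

lemma AE_PiM_all_components:
  assumes "\<And>i. i \<in> I \<Longrightarrow> prob_space (M i)" "countable I"
    and "\<And>i. i \<in> I \<Longrightarrow> AE x in M i. P i x"
  shows "AE \<xi> in PiM I M. \<forall>i\<in>I. P i (\<xi> i)"
  using assms by (intro AE_ball_countable' AE_PiM_component) auto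

lemma AE_E_measurable_set:
  assumes "AE x in M. P x"
  obtains G where "G \<in> sets M" "AE x in M. x \<in> G" "\<And>x. x \<in> G \<Longrightarrow> P x"
proof -
  obtain N where N: "\<And>x. x \<in> space M - N \<Longrightarrow> P x" "N \<in> null_sets M"
    using AE_E3[OF assms] by blast
  from AE_not_in[OF N(2)] have "AE x in M. x \<in> space M - N"
    using AE_space by eventually_elim auto
  with N show thesis by (intro that[of "space M - N"]) auto
qed

lemma (in pair_sigma_finite) AE_pair_measure_Times:
  assumes "A \<in> sets M1" "B \<in> sets M2" "AE x in M1. x \<in> A" "AE y in M2. y \<in> B"
  shows "AE q in M1 \<Otimes>\<^sub>M M2. q \<in> A \<times> B"
proof (rule AE_pair_measure)
  show "{q \<in> space (M1 \<Otimes>\<^sub>M M2). q \<in> A \<times> B} \<in> sets (M1 \<Otimes>\<^sub>M M2)"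
    using assms(1,2) by measurable
  from assms(3) show "AE x in M1. AE y in M2. (x, y) \<in> A \<times> B"
    by eventually_elim (use assms(4) in auto)
qed

lemma (in finite_measure) measure_Diff_UN_ge:
  assumes "A \<in> sets M" "finite D" "\<And>y. y \<in> D \<Longrightarrow> B y \<in> sets M"
  shows "measure M (A - (\<Union>y\<in>D. B y)) \<ge> measure M A - (\<Sum>y\<in>D. measure M (B y))"
proof -
  have "measure M (A - (\<Union>y\<in>D. B y)) = measure M A - measure M (A \<inter> (\<Union>y\<in>D. B y))"
    using assms by (intro finite_measure_Diff') auto
  moreover have "measure M (A \<inter> (\<Union>y\<in>D. B y)) \<le> measure M (\<Union>y\<in>D. B y)"
    using assms by (intro finite_measure_mono) auto
  moreover have "measure M (\<Union>y\<in>D. B y) \<le> (\<Sum>y\<in>D. measure M (B y))"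
    using assms by (intro finite_measure_subadditive_finite) auto
  ultimately show ?thesis by linarith
qed

lemma abs_le_SUP_abs_compact:
  fixes f :: "'a::topological_space \<Rightarrow> real"
  assumes "compact S" "continuous_on S f" "z \<in> S"
  shows "\<bar>f z\<bar> \<le> (SUP z\<in>S. \<bar>f z\<bar>)"
  using assms
  by (intro cSUP_upper bounded_imp_bdd_above compact_imp_bounded compact_continuous_image continuous_intros)

section \<open>Hoeffding's inequality for sample means\<close>

lemma hoeffding_PiM_iid:
  fixes Q :: "'q measure" and g :: "'q \<Rightarrow> real" and N :: nat
  assumes Q: "prob_space Q" and g[measurable]: "g \<in> borel_measurable Q"
    and range: "AE q in Q. g q \<in> {a..b}" and "a < b" and N: "N > 0" and "\<tau> \<ge> 0"
  defines "P \<equiv> PiM {..<N} (\<lambda>_. Q)"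
  shows "measure P {\<xi>\<in>space P. \<tau> \<le> \<bar>(\<Sum>i<N. g (\<xi> i)) / N - (\<integral>q. g q \<partial>Q)\<bar>}
           \<le> 2 * exp (-2 * real N * \<tau>\<^sup>2 / (b - a)\<^sup>2)"
proof -
  interpret P: prob_space P unfolding P_def using Q by (intro prob_space_PiM)
  have component: "distr P Q (\<lambda>\<xi>. \<xi> i) = Q" if "i < N" for i
    unfolding P_def using that Q by (intro distr_PiM_component) auto
  have distr_g: "distr P borel (\<lambda>\<xi>. g (\<xi> i)) = distr Q borel g" if "i < N" for i
  proof -
    have "distr P borel (\<lambda>\<xi>. g (\<xi> i)) = distr (distr P Q (\<lambda>\<xi>. \<xi> i)) borel g"
      using that unfolding P_def by (subst distr_distr) (auto simp: comp_def)
    then show ?thesis using component[OF that] by simp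
  qed
  interpret H: Hoeffding_ineq_iid P "{..<N}" "\<lambda>i \<xi>. g (\<xi> i)" "\<lambda>\<xi>. g (\<xi> 0)" a b "\<integral>q. g q \<partial>Q"
  proof unfold_locales
    have "P.indep_vars (\<lambda>_. Q) (\<lambda>i \<xi>. \<xi> i) {..<N}"
      unfolding P_def using Q by (intro indep_vars_PiM_components)
    from P.indep_vars_compose2[OF this, of "\<lambda>_. g" "\<lambda>_. borel"]
    show "P.indep_vars (\<lambda>_. borel) (\<lambda>i \<xi>. g (\<xi> i)) {..<N}" by simp
    show "distr P borel (\<lambda>\<xi>. g (\<xi> i)) = distr P borel (\<lambda>\<xi>. g (\<xi> 0))" if "i \<in> {..<N}" for i
      using that distr_g N by simp
    show "P.random_variable borel (\<lambda>\<xi>. g (\<xi> 0))"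
      unfolding P_def by measurable (simp add: N)
    show "AE \<xi> in P. g (\<xi> 0) \<in> {a..b}"
      unfolding P_def using Q range N by (intro AE_PiM_component) auto
    have "P.expectation (\<lambda>\<xi>. g (\<xi> 0)) = (\<integral>q. g q \<partial>distr P Q (\<lambda>\<xi>. \<xi> 0))"
      unfolding P_def using N by (subst integral_distr) auto
    then show "(\<integral>q. g q \<partial>Q) \<equiv> P.expectation (\<lambda>\<xi>. g (\<xi> 0))"
      using component N by simp
  qed simp
  show ?thesis
    using H.Hoeffding_ineq_abs_ge' assms by (simp add: lessThan_empty_iff)
qed

lemma sample_mean_deviation_prob_le:
  fixes Q :: "'q measure" and g :: "'q \<Rightarrow> real" and N :: nat
  assumes Q: "prob_space Q" and g[measurable]: "g \<in> borel_measurable Q"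
    and bdd: "AE q in Q. \<bar>g q\<bar> \<le> C" and N: "N > 0" and \<delta>: "0 < \<delta>" "\<delta> \<le> 1"
  defines "P \<equiv> PiM {..<N} (\<lambda>_. Q)"
  shows "measure P {\<xi>\<in>space P. C * sqrt (2 * ln (2 / \<delta>) / N) < \<bar>(\<Sum>i<N. g (\<xi> i)) / N - (\<integral>q. g q \<partial>Q)\<bar>}
           \<le> \<delta>"
proof -
  interpret Q: prob_space Q by (rule Q)
  interpret P: prob_space P unfolding P_def using Q by (intro prob_space_PiM)
  have "AE q in Q. 0 \<le> C" using bdd by eventually_elim auto
  then consider "C = 0" | "C > 0" by fastforce
  then show ?thesis
  proof cases
    case 1
    \<comment> \<open>Hoeffding's bound is useless here: its exponent divides by \<open>C\<^sup>2 = 0\<close>.\<close>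
    from bdd have g0: "AE q in Q. g q = 0" by eventually_elim (auto simp: 1)
    have "AE \<xi> in P. \<forall>i\<in>{..<N}. g (\<xi> i) = 0"
      unfolding P_def using Q g0 by (intro AE_PiM_all_components) auto
    then have "AE \<xi> in P. \<not> C * sqrt (2 * ln (2 / \<delta>) / N) < \<bar>(\<Sum>i<N. g (\<xi> i)) / N - (\<integral>q. g q \<partial>Q)\<bar>"
      by eventually_elim (simp add: 1 integral_eq_zero_AE[OF g0])
    then have "measure P {\<xi>\<in>space P. C * sqrt (2 * ln (2 / \<delta>) / N) < \<bar>(\<Sum>i<N. g (\<xi> i)) / N - (\<integral>q. g q \<partial>Q)\<bar>} = 0"
      by (rule P.prob_eq_0_AE)
    then show ?thesis using \<delta> by simp
  next
    case 2
    define l where "l = ln (2 / \<delta>)"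
    define \<tau> where "\<tau> = C * sqrt (2 * l / N)"
    have "0 \<le> l" using \<delta> by (simp add: l_def)
    then have "0 \<le> \<tau>" using 2 by (simp add: \<tau>_def)
    have "\<tau>\<^sup>2 = C\<^sup>2 * (2 * l / N)"
      using \<open>0 \<le> l\<close> by (simp add: \<tau>_def power_mult_distrib)
    then have exponent: "-2 * real N * \<tau>\<^sup>2 / (C - -C)\<^sup>2 = - l"
      using 2 N by (simp add: power2_eq_square)
    have "measure P {\<xi>\<in>space P. \<tau> < \<bar>(\<Sum>i<N. g (\<xi> i)) / N - (\<integral>q. g q \<partial>Q)\<bar>}
        \<le> measure P {\<xi>\<in>space P. \<tau> \<le> \<bar>(\<Sum>i<N. g (\<xi> i)) / N - (\<integral>q. g q \<partial>Q)\<bar>}"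
      unfolding P_def by (rule P.finite_measure_mono[unfolded P_def]) (auto, measurable)
    also have "\<dots> \<le> 2 * exp (-2 * real N * \<tau>\<^sup>2 / (C - -C)\<^sup>2)"
    proof -
      from bdd have "AE q in Q. g q \<in> {-C..C}" by eventually_elim (simp add: abs_le_iff)
      then show ?thesis
        unfolding P_def using 2 N \<open>0 \<le> \<tau>\<close> by (intro hoeffding_PiM_iid[OF Q g]) auto
    qed
    also have "\<dots> = \<delta>"
      unfolding exponent using \<delta> by (simp add: l_def exp_minus)
    finally show ?thesis unfolding \<tau>_def l_def .
  qed
qed

lemma simultaneous_sample_mean_deviation:
  fixes Q :: "'q measure" and g :: "'y \<Rightarrow> 'q \<Rightarrow> real" and D :: "'y set" and N :: nat
  assumes Q: "prob_space Q" and g[measurable]: "\<And>y. g y \<in> borel_measurable Q"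
    and A: "A \<in> sets Q" "AE q in Q. q \<in> A" and bdd: "\<And>y q. q \<in> A \<Longrightarrow> \<bar>g y q\<bar> \<le> C"
    and D: "finite D" and N: "N > 0" and \<delta>: "0 < \<delta>" "\<delta> \<le> 1"
  defines "P \<equiv> PiM {..<N} (\<lambda>_. Q)"
  shows "\<exists>E\<in>sets P. measure P E \<ge> 1 - \<delta> \<and>
    E \<subseteq> {\<xi>\<in>space P. (\<forall>i<N. \<xi> i \<in> A) \<and> (\<forall>y\<in>D. \<bar>(\<Sum>i<N. g y (\<xi> i)) / N - (\<integral>q. g y q \<partial>Q)\<bar>
          \<le> C * sqrt ((2 * ln (2 * real (card D)) + 2 * ln (1 / \<delta>)) / N))}"
proof -
  interpret P: prob_space P unfolding P_def using Q by (intro prob_space_PiM)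
  define \<tau> where "\<tau> = C * sqrt ((2 * ln (2 * real (card D)) + 2 * ln (1 / \<delta>)) / N)"
  define good where "good = {\<xi>\<in>space P. \<forall>i<N. \<xi> i \<in> A}"
  define bad where "bad y = {\<xi>\<in>space P. \<tau> < \<bar>(\<Sum>i<N. g y (\<xi> i)) / N - (\<integral>q. g y q \<partial>Q)\<bar>}" for y
  define E where "E = good - (\<Union>y\<in>D. bad y)"
  have good_sets: "good \<in> sets P"
    unfolding good_def P_def using A(1) by measurable
  have bad_sets: "bad y \<in> sets P" for y
    unfolding bad_def P_def by measurable
  have "AE \<xi> in P. \<forall>i\<in>{..<N}. \<xi> i \<in> A"
    unfolding P_def using Q A(2) by (intro AE_PiM_all_components) auto
  then have "AE \<xi> in P. \<xi> \<in> good"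
    using AE_space by eventually_elim (auto simp: good_def)
  then have good_prob: "measure P good = 1"
    using good_sets by (simp add: P.AE_in_set_eq_1)
  have bad_prob: "measure P (bad y) \<le> \<delta> / card D" if "y \<in> D" for y
  proof -
    have "0 < card D" using that D by (auto simp: card_gt_0_iff)
    have "ln (2 / (\<delta> / card D)) = ln (2 * real (card D) * (1 / \<delta>))"
      by simp
    also have "\<dots> = ln (2 * real (card D)) + ln (1 / \<delta>)"
      using \<delta> \<open>0 < card D\<close> by (intro ln_mult_pos) auto
    finally have \<tau>_eq: "\<tau> = C * sqrt (2 * ln (2 / (\<delta> / card D)) / N)"
      by (simp add: \<tau>_def)
    from A(2) have "AE q in Q. \<bar>g y q\<bar> \<le> C" by eventually_elim (rule bdd)
    moreover have "\<delta> / card D \<le> 1" using \<delta> \<open>0 < card D\<close> by (simp add: field_simps)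
    ultimately show ?thesis
      unfolding bad_def P_def \<tau>_eq using \<delta> \<open>0 < card D\<close>
      by (intro sample_mean_deviation_prob_le[OF Q g _ N]) auto
  qed
  have "(\<Sum>y\<in>D. measure P (bad y)) \<le> (\<Sum>y\<in>D. \<delta> / card D)"
    by (intro sum_mono bad_prob)
  also have "\<dots> \<le> \<delta>"
    using \<delta> by (cases "D = {}") auto
  finally have "measure P E \<ge> 1 - \<delta>"
    using P.measure_Diff_UN_ge[of good D bad] good_sets D bad_sets good_prob by (simp add: E_def)
  moreover have "E \<in> sets P"
    using good_sets bad_sets D by (auto simp: E_def)
  moreover have "E \<subseteq> {\<xi>\<in>space P. (\<forall>i<N. \<xi> i \<in> A) \<and> (\<forall>y\<in>D. \<bar>(\<Sum>i<N. g y (\<xi> i)) / N - (\<integral>q. g y q \<partial>Q)\<bar>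
          \<le> C * sqrt ((2 * ln (2 * real (card D)) + 2 * ln (1 / \<delta>)) / N))}"
    by (auto simp: E_def good_def bad_def \<tau>_def)
  ultimately show ?thesis by blast
qed

section \<open>Uniform deviation over a compact index set\<close>

lemma covering_number_attained:
  fixes X :: "'a::metric_space set"
  assumes "compact X" "0 < \<epsilon>"
  obtains D where "finite D" "X \<subseteq> (\<Union>y\<in>D. cball y \<epsilon>)" "card D = covering_number \<epsilon> X"
proof -
  let ?covers = "{card D | D. finite D \<and> X \<subseteq> (\<Union>y\<in>D. cball y \<epsilon>)}"
  obtain D where "finite D" and "X \<subseteq> (\<Union>y\<in>D. ball y \<epsilon>)"
    using assms(1)[unfolded compact_eq_totally_bounded] assms(2) by blast
  moreover have "(\<Union>y\<in>D. ball y \<epsilon>) \<subseteq> (\<Union>y\<in>D. cball y \<epsilon>)"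
    by (intro UN_mono ball_subset_cball order_refl)
  ultimately have "card D \<in> ?covers" by blast
  then have "covering_number \<epsilon> X \<in> ?covers"
    unfolding covering_number_def by (rule Inf_nat_def1[OF ex_in_conv[THEN iffD1], OF exI])
  then obtain D where "covering_number \<epsilon> X = card D" "finite D" "X \<subseteq> (\<Union>y\<in>D. cball y \<epsilon>)"
    unfolding mem_Collect_eq by (elim exE conjE)
  then show thesis using that by simp
qed

lemma uniform_sample_mean_deviation:
  fixes Q :: "'q measure" and g :: "'a::metric_space \<Rightarrow> 'q \<Rightarrow> real" and X :: "'a set" and N :: nat
  assumes Q: "prob_space Q" and g[measurable]: "\<And>x. g x \<in> borel_measurable Q"
    and A: "A \<in> sets Q" "AE q in Q. q \<in> A"
    and bdd: "\<And>x q. q \<in> A \<Longrightarrow> \<bar>g x q\<bar> \<le> C"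
    and lip: "\<And>x y q. q \<in> A \<Longrightarrow> \<bar>g x q - g y q\<bar> \<le> L * dist x y"
    and X: "compact X" and L: "0 \<le> L" and N: "N > 0" and \<delta>: "0 < \<delta>" "\<delta> \<le> 1" and \<epsilon>: "0 < \<epsilon>"
  defines "P \<equiv> PiM {..<N} (\<lambda>_. Q)"
  shows "\<exists>E\<in>sets P. measure P E \<ge> 1 - \<delta> \<and>
    E \<subseteq> {\<xi>\<in>space P. (\<forall>i<N. \<xi> i \<in> A) \<and> (\<forall>x\<in>X. \<bar>(\<Sum>i<N. g x (\<xi> i)) / N - (\<integral>q. g x q \<partial>Q)\<bar>
          \<le> C * sqrt ((2 * ln (2 * real (covering_number \<epsilon> X)) + 2 * ln (1 / \<delta>)) / N) + 2 * L * \<epsilon>)}"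
proof -
  interpret Q: prob_space Q by (rule Q)
  obtain D where D: "finite D" "X \<subseteq> (\<Union>y\<in>D. cball y \<epsilon>)" "card D = covering_number \<epsilon> X"
    using covering_number_attained[OF X \<epsilon>] .
  have integrable: "integrable Q (g x)" for x
    using A(2) by (intro Q.integrable_const_bound[where B=C]) (auto intro: bdd)
  have mean_lip: "\<bar>(\<integral>q. g x q \<partial>Q) - (\<integral>q. g y q \<partial>Q)\<bar> \<le> L * dist x y" for x y
  proof -
    have "\<bar>(\<integral>q. g x q \<partial>Q) - (\<integral>q. g y q \<partial>Q)\<bar> = \<bar>\<integral>q. g x q - g y q \<partial>Q\<bar>"
      using integrable by simp
    also have "\<dots> \<le> (\<integral>q. \<bar>g x q - g y q\<bar> \<partial>Q)"
      by (rule integral_abs_bound)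
    also have "\<dots> \<le> (\<integral>q. L * dist x y \<partial>Q)"
      using A(2) integrable by (intro integral_mono_AE) (auto intro: lip)
    finally show ?thesis by (simp add: Q.prob_space)
  qed
  have sample_lip: "\<bar>(\<Sum>i<N. g x (\<xi> i)) / N - (\<Sum>i<N. g y (\<xi> i)) / N\<bar> \<le> L * dist x y"
    if "\<forall>i<N. \<xi> i \<in> A" for x y \<xi>
  proof -
    have "\<bar>(\<Sum>i<N. g x (\<xi> i)) / N - (\<Sum>i<N. g y (\<xi> i)) / N\<bar> = \<bar>\<Sum>i<N. g x (\<xi> i) - g y (\<xi> i)\<bar> / N"
      by (simp add: sum_subtractf diff_divide_distrib[symmetric])
    also have "\<dots> \<le> (\<Sum>i<N. \<bar>g x (\<xi> i) - g y (\<xi> i)\<bar>) / N"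
      by (intro divide_right_mono sum_abs) simp
    also have "\<dots> \<le> (\<Sum>i<N. L * dist x y) / N"
      using that by (intro divide_right_mono sum_mono lip) auto
    finally show ?thesis using N by simp
  qed
  define \<tau> where "\<tau> = C * sqrt ((2 * ln (2 * real (card D)) + 2 * ln (1 / \<delta>)) / N)"
  have net: "\<bar>(\<Sum>i<N. g x (\<xi> i)) / N - (\<integral>q. g x q \<partial>Q)\<bar> \<le> \<tau> + 2 * L * \<epsilon>"
    if "\<forall>i<N. \<xi> i \<in> A" "\<forall>y\<in>D. \<bar>(\<Sum>i<N. g y (\<xi> i)) / N - (\<integral>q. g y q \<partial>Q)\<bar> \<le> \<tau>" "x \<in> X"
    for \<xi> x
  proof -
    obtain y where "y \<in> D" "dist x y \<le> \<epsilon>"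
      using D(2) \<open>x \<in> X\<close> by (auto simp: dist_commute)
    then have "L * dist x y \<le> L * \<epsilon>" using L by (intro mult_left_mono)
    then show ?thesis
      using that(2) \<open>y \<in> D\<close> sample_lip[OF that(1), of x y] mean_lip[of x y] by fastforce
  qed
  have "\<exists>E\<in>sets P. measure P E \<ge> 1 - \<delta> \<and>
    E \<subseteq> {\<xi>\<in>space P. (\<forall>i<N. \<xi> i \<in> A) \<and> (\<forall>y\<in>D. \<bar>(\<Sum>i<N. g y (\<xi> i)) / N - (\<integral>q. g y q \<partial>Q)\<bar> \<le> \<tau>)}"
    unfolding P_def \<tau>_def by (rule simultaneous_sample_mean_deviation[OF Q g A bdd D(1) N \<delta>])
  with net show ?thesis
    unfolding \<tau>_def D(3) by (elim bexE conjE, intro bexI conjI subsetI) auto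
qed

section \<open>Random features\<close>

lemma lipschitz_comp_inner_affine:
  fixes a x y :: "'a::real_inner"
  assumes h: "\<And>s s'. \<bar>h s - h s'\<bar> \<le> L * \<bar>s - s'\<bar>" and L: "0 \<le> L" and a: "norm a \<le> 1"
  shows "\<bar>h (inner a x + b) - h (inner a y + b)\<bar> \<le> L * dist x y"
proof -
  have "\<bar>(inner a x + b) - (inner a y + b)\<bar> = \<bar>inner a (x - y)\<bar>" by (simp add: inner_diff_right)
  also have "\<dots> \<le> norm a * norm (x - y)" by (rule Cauchy_Schwarz_ineq2)
  also have "\<dots> \<le> dist x y" using a by (simp add: dist_norm mult_left_le_one_le)
  finally have "L * \<bar>(inner a x + b) - (inner a y + b)\<bar> \<le> L * dist x y"
    using L by (rule mult_left_mono)
  then show ?thesis using h[of "inner a x + b" "inner a y + b"] by linarith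
qed

definition random_feature ::
  "('a::real_inner \<times> real \<times> real \<Rightarrow> real) \<Rightarrow> ('w \<Rightarrow> real \<Rightarrow> real \<Rightarrow> real) \<Rightarrow> 'a \<Rightarrow> ('a \<times> real \<times> real) \<times> 'w \<Rightarrow> real"
  where "random_feature c k x = (\<lambda>((a, b, t), \<omega>). c (a, b, t) * k \<omega> (inner a x + b) t)"

lemma random_feature_measurable:
  fixes c :: "'a::euclidean_space \<times> real \<times> real \<Rightarrow> real"
  assumes \<rho>: "sets \<rho> = sets borel" and c: "c \<in> borel_measurable borel"
    and k: "(\<lambda>(\<omega>, s, t). k \<omega> s t) \<in> borel_measurable (M \<Otimes>\<^sub>M (borel \<Otimes>\<^sub>M borel))"
  shows "random_feature c k x \<in> borel_measurable (\<rho> \<Otimes>\<^sub>M M)"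
proof -
  have coordinates: "(\<lambda>z::'a \<times> real \<times> real. inner (fst z) x + fst (snd z)) \<in> borel_measurable borel"
    "(\<lambda>z::'a \<times> real \<times> real. snd (snd z)) \<in> borel_measurable borel"
    by (intro borel_measurable_continuous_onI continuous_intros)+
  have "(\<lambda>q::('a \<times> real \<times> real) \<times> _. (snd q, inner (fst (fst q)) x + fst (snd (fst q)), snd (snd (fst q))))
      \<in> measurable (borel \<Otimes>\<^sub>M M) (M \<Otimes>\<^sub>M (borel \<Otimes>\<^sub>M borel))"
    by (intro measurable_Pair measurable_snd measurable_compose[OF measurable_fst] coordinates)
  from measurable_compose[OF this k]
  have "(\<lambda>q. k (snd q) (inner (fst (fst q)) x + fst (snd (fst q))) (snd (snd (fst q))))
      \<in> borel_measurable (borel \<Otimes>\<^sub>M M)" by simp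
  with c have "(\<lambda>q. c (fst q) * k (snd q) (inner (fst (fst q)) x + fst (snd (fst q))) (snd (snd (fst q))))
      \<in> borel_measurable (borel \<Otimes>\<^sub>M M)" by measurable
  also have "(\<lambda>q. c (fst q) * k (snd q) (inner (fst (fst q)) x + fst (snd (fst q))) (snd (snd (fst q))))
      = random_feature c k x"
    by (auto simp: random_feature_def fun_eq_iff)
  finally show ?thesis
    by (subst measurable_cong_sets[OF sets_pair_measure_cong[OF \<rho> refl] refl])
qed

lemma abs_random_feature_le:
  assumes "\<bar>c z\<bar> \<le> C" and "\<And>s t. \<bar>k \<omega> s t\<bar> \<le> 1"
  shows "\<bar>random_feature c k x (z, \<omega>)\<bar> \<le> C"
proof -
  obtain a b t where z: "z = (a, b, t)" by (cases z)
  have "\<bar>c z\<bar> * \<bar>k \<omega> (inner a x + b) t\<bar> \<le> \<bar>c z\<bar>"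
    using assms(2) by (intro mult_left_le) auto
  then show ?thesis using assms(1) by (simp add: random_feature_def z abs_mult)
qed

lemma random_feature_lipschitz:
  assumes "\<bar>c (a, b, t)\<bar> \<le> C" and "\<And>s s'. \<bar>k \<omega> s t - k \<omega> s' t\<bar> \<le> L * \<bar>s - s'\<bar>"
    and "0 \<le> L" and "norm a \<le> 1"
  shows "\<bar>random_feature c k x ((a, b, t), \<omega>) - random_feature c k y ((a, b, t), \<omega>)\<bar> \<le> C * L * dist x y"
proof -
  have "\<bar>random_feature c k x ((a, b, t), \<omega>) - random_feature c k y ((a, b, t), \<omega>)\<bar>
      = \<bar>c (a, b, t)\<bar> * \<bar>k \<omega> (inner a x + b) t - k \<omega> (inner a y + b) t\<bar>"
    by (simp add: random_feature_def abs_mult[symmetric] right_diff_distrib)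
  also have "\<dots> \<le> C * (L * dist x y)"
    using assms by (intro mult_mono lipschitz_comp_inner_affine[where h = "\<lambda>s. k \<omega> s t"]) auto
  finally show ?thesis by simp
qed

lemma integral_random_feature:
  assumes "pair_sigma_finite \<rho> M" and "integrable (\<rho> \<Otimes>\<^sub>M M) (random_feature c k x)"
  shows "(\<integral>q. random_feature c k x q \<partial>(\<rho> \<Otimes>\<^sub>M M))
    = (\<integral>z. c z * mean_kernel M k (inner (fst z) x + fst (snd z)) (snd (snd z)) \<partial>\<rho>)"
proof -
  have "(\<integral>q. random_feature c k x q \<partial>(\<rho> \<Otimes>\<^sub>M M)) = (\<integral>z. (\<integral>\<omega>. random_feature c k x (z, \<omega>) \<partial>M) \<partial>\<rho>)"
    using pair_sigma_finite.integral_fst'[OF assms] by simp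
  also have "\<dots> = (\<integral>z. c z * mean_kernel M k (inner (fst z) x + fst (snd z)) (snd (snd z)) \<partial>\<rho>)"
    by (intro Bochner_Integration.integral_cong) (auto simp: random_feature_def mean_kernel_def split: prod.splits)
  finally show ?thesis .
qed

lemma random_feature_uniform_deviation:
  fixes M :: "'w measure" and k :: "'w \<Rightarrow> real \<Rightarrow> real \<Rightarrow> real"
    and X :: "'a::euclidean_space set" and \<rho> :: "('a \<times> real \<times> real) measure"
    and c :: "'a \<times> real \<times> real \<Rightarrow> real" and S :: "('a \<times> real \<times> real) set"
    and C L\<^sub>k \<delta> \<epsilon> :: real and N :: nat
  assumes M: "prob_space M"
    and k_meas: "(\<lambda>(\<omega>, s, t). k \<omega> s t) \<in> borel_measurable (M \<Otimes>\<^sub>M (borel \<Otimes>\<^sub>M borel))"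
    and Lip: "AE \<omega> in M. \<forall>s s' t. \<bar>k \<omega> s t - k \<omega> s' t\<bar> \<le> L\<^sub>k * \<bar>s - s'\<bar>"
    and k_bdd: "AE \<omega> in M. \<forall>s t. \<bar>k \<omega> s t\<bar> \<le> 1"
    and \<rho>: "prob_space \<rho>" "sets \<rho> = sets borel"
    and S: "S \<in> sets borel" "AE z in \<rho>. z \<in> S" "\<forall>z\<in>S. norm (fst z) \<le> 1"
    and c: "c \<in> borel_measurable borel" "\<And>z. \<bar>c z\<bar> \<le> C"
    and X: "compact X" and N: "N > 0" and \<delta>: "0 < \<delta>" "\<delta> \<le> 1" and \<epsilon>: "0 < \<epsilon>"
  defines "P \<equiv> PiM {..<N} (\<lambda>_. \<rho> \<Otimes>\<^sub>M M)"
  shows "\<exists>E\<in>sets P. measure P E \<ge> 1 - \<delta> \<and>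
    E \<subseteq> {\<xi>\<in>space P. (\<forall>i<N. fst (\<xi> i) \<in> S) \<and> (\<forall>x\<in>X.
      \<bar>(\<Sum>i<N. random_feature c k x (\<xi> i)) / N
        - (\<integral>z. c z * mean_kernel M k (inner (fst z) x + fst (snd z)) (snd (snd z)) \<partial>\<rho>)\<bar>
      \<le> C * sqrt ((2 * ln (2 * real (covering_number \<epsilon> X)) + 2 * ln (1 / \<delta>)) / N) + 2 * C * L\<^sub>k * \<epsilon>)}"
proof -
  interpret M: prob_space M by (rule M)
  interpret \<rho>: prob_space \<rho> by (rule \<rho>(1))
  interpret Q: pair_prob_space \<rho> M ..
  obtain G where G: "G \<in> sets M" "AE \<omega> in M. \<omega> \<in> G"
    and G_good: "\<And>\<omega>. \<omega> \<in> G \<Longrightarrow>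
      (\<forall>s s' t. \<bar>k \<omega> s t - k \<omega> s' t\<bar> \<le> L\<^sub>k * \<bar>s - s'\<bar>) \<and> (\<forall>s t. \<bar>k \<omega> s t\<bar> \<le> 1)"
    by (rule AE_E_measurable_set[OF AE_conjI[OF Lip k_bdd]]) (rule that)
  have G_lip: "\<And>\<omega> s s' t. \<omega> \<in> G \<Longrightarrow> \<bar>k \<omega> s t - k \<omega> s' t\<bar> \<le> L\<^sub>k * \<bar>s - s'\<bar>"
    and G_bdd: "\<And>\<omega> s t. \<omega> \<in> G \<Longrightarrow> \<bar>k \<omega> s t\<bar> \<le> 1"
    using G_good by simp_all
  from Lip have "AE \<omega> in M. 0 \<le> L\<^sub>k"
  proof eventually_elim
    case (elim \<omega>)
    then have "\<bar>k \<omega> 1 0 - k \<omega> 0 0\<bar> \<le> L\<^sub>k" using elim[rule_format, of 1 0 0] by simp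
    then show ?case by (rule order_trans[OF abs_ge_zero])
  qed
  then have L: "0 \<le> L\<^sub>k" by simp
  have "0 \<le> C" by (rule order_trans[OF abs_ge_zero c(2)])
  then have CL: "0 \<le> C * L\<^sub>k" using L by simp
  have "S \<in> sets \<rho>" using S(1) \<rho>(2) by simp
  then have SG: "S \<times> G \<in> sets (\<rho> \<Otimes>\<^sub>M M)" and SG_AE: "AE q in \<rho> \<Otimes>\<^sub>M M. q \<in> S \<times> G"
    using G S(2) by (auto intro: Q.AE_pair_measure_Times)
  have bdd: "\<bar>random_feature c k x q\<bar> \<le> C" if "q \<in> S \<times> G" for x q
    using that c(2) G_bdd by (auto intro: abs_random_feature_le)
  have lip: "\<bar>random_feature c k x q - random_feature c k y q\<bar> \<le> C * L\<^sub>k * dist x y"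
    if "q \<in> S \<times> G" for x y q
    using that c(2) G_lip L S(3) by (auto intro!: random_feature_lipschitz)
  have meas: "random_feature c k x \<in> borel_measurable (\<rho> \<Otimes>\<^sub>M M)" for x
    using \<rho>(2) c(1) k_meas by (rule random_feature_measurable)
  have mean: "(\<integral>q. random_feature c k x q \<partial>(\<rho> \<Otimes>\<^sub>M M))
      = (\<integral>z. c z * mean_kernel M k (inner (fst z) x + fst (snd z)) (snd (snd z)) \<partial>\<rho>)" for x
  proof (rule integral_random_feature)
    show "pair_sigma_finite \<rho> M" ..
    show "integrable (\<rho> \<Otimes>\<^sub>M M) (random_feature c k x)"
      using SG_AE meas by (intro Q.P.integrable_const_bound[where B=C]) (auto intro: bdd)
  qed
  have "\<exists>E\<in>sets P. measure P E \<ge> 1 - \<delta> \<and>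
    E \<subseteq> {\<xi>\<in>space P. (\<forall>i<N. \<xi> i \<in> S \<times> G) \<and> (\<forall>x\<in>X.
      \<bar>(\<Sum>i<N. random_feature c k x (\<xi> i)) / N - (\<integral>q. random_feature c k x q \<partial>(\<rho> \<Otimes>\<^sub>M M))\<bar>
      \<le> C * sqrt ((2 * ln (2 * real (covering_number \<epsilon> X)) + 2 * ln (1 / \<delta>)) / N) + 2 * (C * L\<^sub>k) * \<epsilon>)}"
    unfolding P_def by (rule uniform_sample_mean_deviation[OF Q.prob_space_axioms meas SG SG_AE bdd lip X CL N \<delta> \<epsilon>])
  then show ?thesis
    by (simp only: mean mult.assoc mem_Times_iff) blast
qed

theorem theorem11:
  fixes M :: "'w measure"
    and k :: "'w \<Rightarrow> real \<Rightarrow> real \<Rightarrow> real"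
    and X :: "'a::euclidean_space set"
    and \<rho> :: "('a \<times> real \<times> real) measure"
    and c :: "'a \<times> real \<times> real \<Rightarrow> real"
    and L\<^sub>k \<delta> \<epsilon> :: real
    and N :: nat
  assumes M: "prob_space M"
    and k_meas: "(\<lambda>(\<omega>, s, t). k \<omega> s t) \<in> borel_measurable (M \<Otimes>\<^sub>M (borel \<Otimes>\<^sub>M borel))"
    and K_cont: "continuous_on UNIV (\<lambda>(s, t). mean_kernel M k s t)"
    and K_pd: "pd_kernel (mean_kernel M k)"
    and X: "compact X"
    and Lip: "AE \<omega> in M. \<forall>s s' t. \<bar>k \<omega> s t - k \<omega> s' t\<bar> \<le> L\<^sub>k * \<bar>s - s'\<bar>"
    and \<rho>: "prob_space \<rho>" "sets \<rho> = sets borel"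
    and \<rho>_supp: "AE z in \<rho>. z \<in> {(a, b, t). norm a \<le> 1 \<and> \<bar>b\<bar> \<le> 1 \<and> \<bar>t\<bar> \<le> 1}"
    and k_bdd: "AE \<omega> in M. \<forall>s t. \<bar>k \<omega> s t\<bar> \<le> 1"
    and c_cont: "continuous_on {(a, b, t). norm a \<le> 1 \<and> \<bar>b\<bar> \<le> 1 \<and> \<bar>t\<bar> \<le> 1} c"
    and N: "N > 0"
    and \<delta>: "0 < \<delta>" "\<delta> < 1"
    and \<epsilon>: "0 < \<epsilon>"
  shows
    "let S = {(a, b, t). norm a \<le> 1 \<and> \<bar>b\<bar> \<le> 1 \<and> \<bar>t\<bar> \<le> 1};
         K = mean_kernel M k;
         C = (SUP z\<in>S. \<bar>c z\<bar>);
         f = (\<lambda>x. set_lebesgue_integral \<rho> S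
                (\<lambda>(a, b, t). c (a, b, t) * K (inner a x + b) t));
         F = (\<lambda>(\<xi> :: nat \<Rightarrow> ('a \<times> real \<times> real) \<times> 'w) x.
                (1 / real N) * (\<Sum>i<N. (case \<xi> i of ((a, b, t), \<omega>) \<Rightarrow>
                    c (a, b, t) * k \<omega> (inner a x + b) t)));
         P = PiM {..<N} (\<lambda>_. \<rho> \<Otimes>\<^sub>M M);
         bound = C * sqrt ((2 * ln (2 * real (covering_number \<epsilon> X)) + 2 * ln (1 / \<delta>)) / real N)
                 + 2 * C * L\<^sub>k * \<epsilon>
     in \<exists>E\<in>sets P. measure P E \<ge> 1 - \<delta> \<and>
          E \<subseteq> {\<xi>\<in>space P. \<forall>x\<in>X. \<bar>F \<xi> x - f x\<bar> \<le> bound}"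
proof -
  define S :: "('a \<times> real \<times> real) set" where "S = {(a, b, t). norm a \<le> 1 \<and> \<bar>b\<bar> \<le> 1 \<and> \<bar>t\<bar> \<le> 1}"
  define C where "C = (SUP z\<in>S. \<bar>c z\<bar>)"
  \<comment> \<open>\<open>c\<close> is only continuous on \<open>S\<close>; its zero extension is Borel and agrees with \<open>c\<close> on the support of \<open>\<rho>\<close>.\<close>
  define c' where "c' = (\<lambda>z. indicator S z * c z)"
  have "S = cball 0 1 \<times> cball 0 1 \<times> cball 0 1" by (auto simp: S_def)
  then have "compact S" by (simp add: compact_Times)
  have c_cont: "continuous_on S c" using c_cont by (simp add: S_def)
  have c_le_C: "\<bar>c z\<bar> \<le> C" if "z \<in> S" for z
    unfolding C_def using \<open>compact S\<close> c_cont that by (rule abs_le_SUP_abs_compact)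
  have "0 \<le> C" using c_le_C[of "(0, 0, 0)"] by (simp add: S_def)
  with c_le_C have c'_bdd: "\<bar>c' z\<bar> \<le> C" for z by (simp add: c'_def indicator_def)
  have c'_meas: "c' \<in> borel_measurable borel"
    using borel_measurable_continuous_on_indicator[OF _ c_cont] \<open>compact S\<close>
    by (simp add: c'_def compact_imp_closed)
  have S_AE: "AE z in \<rho>. z \<in> S" using \<rho>_supp by (simp add: S_def)
  have S_borel: "S \<in> sets borel" using \<open>compact S\<close> by (simp add: compact_imp_closed)
  have S_norm: "\<forall>z\<in>S. norm (fst z) \<le> 1" by (auto simp: S_def)
  have F_eq: "(\<Sum>i<N. (case \<xi> i of ((a, b, t), \<omega>) \<Rightarrow> c (a, b, t) * k \<omega> (inner a x + b) t))
      = (\<Sum>i<N. random_feature c' k x (\<xi> i))" if "\<forall>i<N. fst (\<xi> i) \<in> S" for \<xi> x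
    using that by (intro sum.cong) (auto simp: random_feature_def c'_def split: prod.splits)
  have f_eq: "set_lebesgue_integral \<rho> S (\<lambda>(a, b, t). c (a, b, t) * mean_kernel M k (inner a x + b) t)
      = (\<integral>z. c' z * mean_kernel M k (inner (fst z) x + fst (snd z)) (snd (snd z)) \<partial>\<rho>)" for x
    unfolding set_lebesgue_integral_def c'_def
    by (intro Bochner_Integration.integral_cong) (auto split: prod.splits)
  from random_feature_uniform_deviation[OF M k_meas Lip k_bdd \<rho> S_borel S_AE S_norm c'_meas c'_bdd
      X N \<delta>(1) less_imp_le[OF \<delta>(2)] \<epsilon>]
  show ?thesis
    unfolding Let_def S_def[symmetric] C_def[symmetric]
    by (elim bexE conjE, intro bexI conjI subsetI) (auto simp: F_eq f_eq)
qed

end
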